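(* Let $\mathfrak{C}=(U,M,I,N,J)$ be a formal decision context. Then the set of necessary II-decision rules of $\mathfrak{C}$ is $$\overline{\mathfrak{R}}_{II}(\mathfrak{C})=\{(\cup[O]_{S_1},(\cup[O]_{S_1})^{\square_M})\rightarrow(O^{\lozenge_N\square_N},O^{\lozenge_N})\mid O\in\mathrm{Ext}L_O(\mathfrak{C}_M)\}.$$
   Context: Formal context $(U,M,I)$: $U$ and $M$ are finite nonempty sets and $I\subseteq U\times M$. For $O\subseteq U$ and $C\subseteq M$ define: - $O^{\lozenge}=\{a\in M\mid\exists x\in O\,((x,a)\in I)\}$ and $C^{\square}=\{x\in U\mid \forall a\in M\,((x,a)\in I\Rightarrow a\in C)\}$; - $O^{\square}=\{a\in M\mid \forall x\in U\,((x,a)\in I\Rightarrow x\in O)\}$ and $C^{\lozenge}=\{x\in U\mid \exists a\in C\,((x,a)\in I)\}$. An object-oriented concept is a pair $(O,C)$ with $O^\square=C$ (the $\square$ on subsets of $U$) and $C^\lozenge=O$ (the $\lozenge$ on subsets of $M$); the set of these is $L_O$. A property-oriented concept is a pair $(O,C)$ with $O^\lozenge=C$ (the $\lozenge$ on subsets of $U$) and $C^\square=O$ (the $\square$ on subsets of $M$); the set of these is $L_P$. $\mathrm{Ext}$ denotes the set of extents. Standing assumption: contexts are canonical, i.e. for all $x\in U$ and $a\in M$ we have $\{x\}^\uparrow\notin\{\emptyset,M\}$ and $\{a\}^\downarrow\notin\{\emptyset,U\}$, where $\{x\}^\uparrow$ is the set of attributes of $x$ and $\{a\}^\downarrow$ is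 the set of objects having $a$. A formal decision context $\mathfrak{C}=(U,M,I,N,J)$ has conditional context $\mathfrak{C}_M=(U,M,I)$ and decision context $\mathfrak{C}_N=(U,N,J)$, with $M\cap N=\emptyset$. Subscripts $M$ and $N$ indicate the context in which an operator is computed. A II-decision rule is $(O,C)\rightarrow(Y,D)$ with $(O,C)\in L_O(\mathfrak{C}_M)$, $(Y,D)\in L_P(\mathfrak{C}_N)$ and $O\subseteq Y$; the set of these is $\mathfrak{R}_{II}(\mathfrak{C})$. Implication: $(O_1,C_1)\rightarrow(Y_1,D_1)\Rightarrow(O_2,C_2)\rightarrow(Y_2,D_2)$ iff $O_2\subseteq O_1\subseteq Y_1\subseteq Y_2$. A rule $r$ is necessary if there is no $r_1\in\mathfrak{R}_{II}(\mathfrak{C})\setminus\{r\}$ with $r_1\Rightarrow r$. $S_1$ is the equivalence relation on $\mathrm{Ext}L_O(\mathfrak{C}_M)$ given by $(O,Y)\in S_1$ iff $O^{\lozenge_N}=Y^{\lozenge_N}$. $[O]_{S_1}$ is the class of $O$, and $\cup[O]_{S_1}$ is the union of its members. *)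

theory Defs
  imports Main
begin

definition formal_context :: "'u set \<Rightarrow> 'm set \<Rightarrow> ('u \<times> 'm) set \<Rightarrow> bool" where
  "formal_context U M I \<longleftrightarrow> finite U \<and> finite M \<and> U \<noteq> {} \<and> M \<noteq> {} \<and> I \<subseteq> U \<times> M"

definition canonical :: "'u set \<Rightarrow> 'm set \<Rightarrow> ('u \<times> 'm) set \<Rightarrow> bool" where
  "canonical U M I \<longleftrightarrow>
     (\<forall>x\<in>U. {a\<in>M. (x,a)\<in>I} \<notin> {{}, M}) \<and> (\<forall>a\<in>M. {x\<in>U. (x,a)\<in>I} \<notin> {{}, U})"

definition obox :: "'u set \<Rightarrow> 'm set \<Rightarrow> ('u \<times> 'm) set \<Rightarrow> 'u set \<Rightarrow> 'm set" where
  "obox U M I X = {a\<in>M. \<forall>x\<in>U. (x,a)\<in>I \<longrightarrow> x\<in>X}"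

definition odia :: "'u set \<Rightarrow> 'm set \<Rightarrow> ('u \<times> 'm) set \<Rightarrow> 'u set \<Rightarrow> 'm set" where
  "odia U M I X = {a\<in>M. \<exists>x\<in>X. (x,a)\<in>I}"

definition abox :: "'u set \<Rightarrow> 'm set \<Rightarrow> ('u \<times> 'm) set \<Rightarrow> 'm set \<Rightarrow> 'u set" where
  "abox U M I C = {x\<in>U. \<forall>a\<in>M. (x,a)\<in>I \<longrightarrow> a\<in>C}"

definition adia :: "'u set \<Rightarrow> 'm set \<Rightarrow> ('u \<times> 'm) set \<Rightarrow> 'm set \<Rightarrow> 'u set" where
  "adia U M I C = {x\<in>U. \<exists>a\<in>C. (x,a)\<in>I}"

definition LO :: "'u set \<Rightarrow> 'm set \<Rightarrow> ('u \<times> 'm) set \<Rightarrow> ('u set \<times> 'm set) set" where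
  "LO U M I = {(X, C). X \<subseteq> U \<and> C \<subseteq> M \<and> obox U M I X = C \<and> adia U M I C = X}"

definition LP :: "'u set \<Rightarrow> 'm set \<Rightarrow> ('u \<times> 'm) set \<Rightarrow> ('u set \<times> 'm set) set" where
  "LP U M I = {(X, C). X \<subseteq> U \<and> C \<subseteq> M \<and> odia U M I X = C \<and> abox U M I C = X}"

definition ExtLO :: "'u set \<Rightarrow> 'm set \<Rightarrow> ('u \<times> 'm) set \<Rightarrow> 'u set set" where
  "ExtLO U M I = fst ` LO U M I"

text \<open>Conditional attributes have type 'm, decision attributes type 'n (so M and N are disjoint).\<close>
definition formal_decision_context ::
  "'u set \<Rightarrow> 'm set \<Rightarrow> ('u \<times> 'm) set \<Rightarrow> 'n set \<Rightarrow> ('u \<times> 'n) set \<Rightarrow> bool" where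
  "formal_decision_context U M I N J \<longleftrightarrow>
     formal_context U M I \<and> formal_context U N J \<and> canonical U M I \<and> canonical U N J"

type_synonym ('u, 'm, 'n) rule = "('u set \<times> 'm set) \<times> ('u set \<times> 'n set)"

definition rules_II ::
  "'u set \<Rightarrow> 'm set \<Rightarrow> ('u \<times> 'm) set \<Rightarrow> 'n set \<Rightarrow> ('u \<times> 'n) set \<Rightarrow> ('u, 'm, 'n) rule set" where
  "rules_II U M I N J = {((X, C), (Y, D)). (X, C) \<in> LO U M I \<and> (Y, D) \<in> LP U N J \<and> X \<subseteq> Y}"

definition rule_implies :: "('u, 'm, 'n) rule \<Rightarrow> ('u, 'm, 'n) rule \<Rightarrow> bool" where
  "rule_implies r1 r2 \<longleftrightarrow>
     fst (fst r2) \<subseteq> fst (fst r1) \<and> fst (fst r1) \<subseteq> fst (snd r1) \<and> fst (snd r1) \<subseteq> fst (snd r2)"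

definition necessary_rules_II ::
  "'u set \<Rightarrow> 'm set \<Rightarrow> ('u \<times> 'm) set \<Rightarrow> 'n set \<Rightarrow> ('u \<times> 'n) set \<Rightarrow> ('u, 'm, 'n) rule set" where
  "necessary_rules_II U M I N J =
     {r \<in> rules_II U M I N J. \<not> (\<exists>r1 \<in> rules_II U M I N J - {r}. rule_implies r1 r)}"

definition S1 ::
  "'u set \<Rightarrow> 'm set \<Rightarrow> ('u \<times> 'm) set \<Rightarrow> 'n set \<Rightarrow> ('u \<times> 'n) set \<Rightarrow> ('u set \<times> 'u set) set" where
  "S1 U M I N J = {(X, Y). X \<in> ExtLO U M I \<and> Y \<in> ExtLO U M I \<and> odia U N J X = odia U N J Y}"

end

theory Submission
  imports Defs
begin

text \<open>
  The operators \<open>odia\<close> and \<open>abox\<close> of the decision context form a Galois connection, so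
  \<open>Y \<mapsto> Y\<^sup>\<diamond>\<^sup>\<box>\<close> is a closure operator whose closed sets are the extents of \<open>LP\<close>: for a rule
  with antecedent extent \<open>O\<close>, the smallest admissible consequent is \<open>(O\<^sup>\<diamond>\<^sup>\<box>, O\<^sup>\<diamond>)\<close>.
  Extents of \<open>LO\<close> are closed under arbitrary unions, so \<open>\<Union>[O]\<^sub>S\<^sub>1\<close> is the largest extent with
  the same image under \<open>odia\<close>, i.e. the largest antecedent compatible with that consequent.
  Hence every rule is implied by the rule built in this way from its own antecedent, and
  such a rule is implied by no other rule.
\<close>

lemma mem_ExtLO_iff: "X \<in> ExtLO U M I \<longleftrightarrow> X \<subseteq> U \<and> adia U M I (obox U M I X) = X"
  unfolding ExtLO_def LO_def image_def obox_def by auto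

lemma mem_LO_iff: "(X, C) \<in> LO U M I \<longleftrightarrow> X \<in> ExtLO U M I \<and> C = obox U M I X"
  unfolding ExtLO_def LO_def image_def obox_def by auto

lemma mem_LP_iff:
  "(Y, D) \<in> LP U N J \<longleftrightarrow> Y \<subseteq> U \<and> D = odia U N J Y \<and> abox U N J (odia U N J Y) = Y"
  unfolding LP_def odia_def by auto

lemma mem_rules_II_iff:
  "((X, C), (Y, D)) \<in> rules_II U M I N J \<longleftrightarrow>
     X \<in> ExtLO U M I \<and> C = obox U M I X \<and> (Y, D) \<in> LP U N J \<and> X \<subseteq> Y"
  unfolding rules_II_def mem_LO_iff by auto

lemma odia_subset_iff_subset_abox:
  "X \<subseteq> U \<Longrightarrow> odia U N J X \<subseteq> D \<longleftrightarrow> X \<subseteq> abox U N J D"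
  unfolding odia_def abox_def by blast

lemma odia_mono: "X \<subseteq> Y \<Longrightarrow> odia U N J X \<subseteq> odia U N J Y"
  unfolding odia_def by blast

lemma obox_mono: "X \<subseteq> Y \<Longrightarrow> obox U M I X \<subseteq> obox U M I Y"
  unfolding obox_def by blast

lemma abox_mono: "D \<subseteq> D' \<Longrightarrow> abox U N J D \<subseteq> abox U N J D'"
  unfolding abox_def by blast

lemma abox_subset: "abox U N J D \<subseteq> U"
  unfolding abox_def by blast

lemma ExtLO_subset: "X \<in> ExtLO U M I \<Longrightarrow> X \<subseteq> U"
  by (simp add: mem_ExtLO_iff)

lemma subset_abox_odia: "X \<subseteq> U \<Longrightarrow> X \<subseteq> abox U N J (odia U N J X)"
  by (simp flip: odia_subset_iff_subset_abox)

lemma odia_abox_odia: "X \<subseteq> U \<Longrightarrow> odia U N J (abox U N J (odia U N J X)) = odia U N J X"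
proof -
  assume "X \<subseteq> U"
  then have "odia U N J X \<subseteq> odia U N J (abox U N J (odia U N J X))"
    by (intro odia_mono subset_abox_odia)
  moreover have "odia U N J (abox U N J (odia U N J X)) \<subseteq> odia U N J X"
    by (simp add: odia_subset_iff_subset_abox[OF abox_subset])
  ultimately show ?thesis by blast
qed

lemma abox_odia_in_LP: "X \<subseteq> U \<Longrightarrow> (abox U N J (odia U N J X), odia U N J X) \<in> LP U N J"
  by (simp add: mem_LP_iff abox_subset odia_abox_odia)

lemma abox_odia_least:
  assumes "(Y, D) \<in> LP U N J" and "X \<subseteq> Y"
  shows "abox U N J (odia U N J X) \<subseteq> Y"
proof -
  have "abox U N J (odia U N J X) \<subseteq> abox U N J (odia U N J Y)"
    using assms(2) by (intro abox_mono odia_mono)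
  also have "abox U N J (odia U N J Y) = Y"
    using assms(1) unfolding mem_LP_iff by (elim conjE)
  finally show ?thesis .
qed

lemma Union_in_ExtLO:
  assumes "\<X> \<subseteq> ExtLO U M I"
  shows "\<Union>\<X> \<in> ExtLO U M I"
proof -
  have "\<Union>\<X> \<subseteq> adia U M I (obox U M I (\<Union>\<X>))"
  proof
    fix x assume "x \<in> \<Union>\<X>"
    then obtain X where X: "X \<in> \<X>" "x \<in> X" by blast
    then have "x \<in> adia U M I (obox U M I X)"
      using assms by (auto simp: mem_ExtLO_iff)
    moreover have "obox U M I X \<subseteq> obox U M I (\<Union>\<X>)"
      using X by (intro obox_mono) blast
    ultimately show "x \<in> adia U M I (obox U M I (\<Union>\<X>))"
      unfolding adia_def by blast
  qed
  moreover have "adia U M I (obox U M I (\<Union>\<X>)) \<subseteq> \<Union>\<X>"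
    unfolding adia_def obox_def by blast
  moreover have "\<Union>\<X> \<subseteq> U"
    using assms ExtLO_subset by blast
  ultimately show ?thesis by (auto simp: mem_ExtLO_iff)
qed

lemma S1_class_Union_in_ExtLO: "\<Union> (S1 U M I N J `` {X}) \<in> ExtLO U M I"
  by (rule Union_in_ExtLO) (auto simp: S1_def)

lemma subset_S1_class_Union: "X \<in> ExtLO U M I \<Longrightarrow> X \<subseteq> \<Union> (S1 U M I N J `` {X})"
  by (auto simp: S1_def)

lemma S1_class_Union_greatest:
  "X \<in> ExtLO U M I \<Longrightarrow> Y \<in> ExtLO U M I \<Longrightarrow> odia U N J Y = odia U N J X
     \<Longrightarrow> Y \<subseteq> \<Union> (S1 U M I N J `` {X})"
  by (auto simp: S1_def)

lemma odia_S1_class_Union: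
  assumes "X \<in> ExtLO U M I"
  shows "odia U N J (\<Union> (S1 U M I N J `` {X})) = odia U N J X"
proof
  show "odia U N J (\<Union> (S1 U M I N J `` {X})) \<subseteq> odia U N J X"
    unfolding odia_def S1_def by blast
  show "odia U N J X \<subseteq> odia U N J (\<Union> (S1 U M I N J `` {X}))"
    using assms by (intro odia_mono subset_S1_class_Union)
qed

lemma S1_class_Union_subset_abox_odia:
  "X \<in> ExtLO U M I \<Longrightarrow> \<Union> (S1 U M I N J `` {X}) \<subseteq> abox U N J (odia U N J X)"
  by (metis S1_class_Union_in_ExtLO ExtLO_subset odia_S1_class_Union subset_abox_odia)

definition rule_of_extent ::
  "'u set \<Rightarrow> 'm set \<Rightarrow> ('u \<times> 'm) set \<Rightarrow> 'n set \<Rightarrow> ('u \<times> 'n) set \<Rightarrow> 'u set \<Rightarrow> ('u, 'm, 'n) rule"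
  where "rule_of_extent U M I N J X =
    ((\<Union> (S1 U M I N J `` {X}), obox U M I (\<Union> (S1 U M I N J `` {X}))),
     (abox U N J (odia U N J X), odia U N J X))"

lemma rule_of_extent_in_rules_II:
  "X \<in> ExtLO U M I \<Longrightarrow> rule_of_extent U M I N J X \<in> rules_II U M I N J"
  by (simp add: rule_of_extent_def mem_rules_II_iff S1_class_Union_in_ExtLO abox_odia_in_LP
      ExtLO_subset S1_class_Union_subset_abox_odia)

lemma rule_of_extent_implies:
  assumes "((X, C), (Y, D)) \<in> rules_II U M I N J"
  shows "rule_implies (rule_of_extent U M I N J X) ((X, C), (Y, D))"
proof -
  have X: "X \<in> ExtLO U M I" and LP: "(Y, D) \<in> LP U N J" and "X \<subseteq> Y"
    using assms by (simp_all add: mem_rules_II_iff)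
  from LP \<open>X \<subseteq> Y\<close> have "abox U N J (odia U N J X) \<subseteq> Y"
    by (rule abox_odia_least)
  with X show ?thesis
    by (simp add: rule_implies_def rule_of_extent_def subset_S1_class_Union
        S1_class_Union_subset_abox_odia)
qed

lemma rule_implies_rule_of_extent_eq:
  assumes X: "X \<in> ExtLO U M I"
    and r: "r \<in> rules_II U M I N J" "rule_implies r (rule_of_extent U M I N J X)"
  shows "r = rule_of_extent U M I N J X"
proof -
  obtain X' C' Y' D' where r_eq: "r = ((X', C'), (Y', D'))"
    by (metis prod.collapse)
  have X': "X' \<in> ExtLO U M I" "C' = obox U M I X'" and LP: "(Y', D') \<in> LP U N J"
    and "X' \<subseteq> Y'"
    using r(1) by (auto simp: r_eq mem_rules_II_iff)
  have W_sub: "\<Union> (S1 U M I N J `` {X}) \<subseteq> X'" and Y'_sub: "Y' \<subseteq> abox U N J (odia U N J X)"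
    using r(2) by (auto simp: r_eq rule_implies_def rule_of_extent_def)
  have "X \<subseteq> Y'"
    using subset_S1_class_Union[OF X] W_sub \<open>X' \<subseteq> Y'\<close> by blast
  then have Y': "Y' = abox U N J (odia U N J X)"
    using Y'_sub abox_odia_least[OF LP] by blast
  have "D' = odia U N J Y'"
    using LP unfolding mem_LP_iff by (elim conjE)
  then have D': "D' = odia U N J X"
    using Y' odia_abox_odia[OF ExtLO_subset[OF X]] by simp
  have "odia U N J X' \<subseteq> odia U N J X"
    using \<open>X' \<subseteq> Y'\<close> Y' X'(1) by (simp add: odia_subset_iff_subset_abox ExtLO_subset)
  moreover have "odia U N J X \<subseteq> odia U N J X'"
    using odia_mono[OF W_sub, of U N J] odia_S1_class_Union[OF X, of N J] by simp
  ultimately have "X' \<subseteq> \<Union> (S1 U M I N J `` {X})"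
    by (intro S1_class_Union_greatest[OF X X'(1)]) (rule subset_antisym)
  then have "X' = \<Union> (S1 U M I N J `` {X})"
    using W_sub by (rule subset_antisym)
  then show ?thesis
    using r_eq X'(2) Y' D' by (simp add: rule_of_extent_def)
qed

lemma necessary_rules_II_eq_image_rule_of_extent:
  "necessary_rules_II U M I N J = rule_of_extent U M I N J ` ExtLO U M I"
proof (intro equalityI subsetI)
  fix r assume nec: "r \<in> necessary_rules_II U M I N J"
  obtain X C Y D where r_eq: "r = ((X, C), (Y, D))"
    by (metis prod.collapse)
  have r: "((X, C), (Y, D)) \<in> rules_II U M I N J"
    using nec by (simp add: necessary_rules_II_def r_eq)
  then have X: "X \<in> ExtLO U M I"
    by (simp add: mem_rules_II_iff)
  have "rule_of_extent U M I N J X \<notin> rules_II U M I N J - {r}"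
    using nec rule_of_extent_implies[OF r] by (auto simp: necessary_rules_II_def r_eq)
  then have "r = rule_of_extent U M I N J X"
    using rule_of_extent_in_rules_II[OF X] by blast
  then show "r \<in> rule_of_extent U M I N J ` ExtLO U M I"
    using X by blast
next
  fix r assume "r \<in> rule_of_extent U M I N J ` ExtLO U M I"
  then obtain X where X: "X \<in> ExtLO U M I" and r_eq: "r = rule_of_extent U M I N J X"
    by blast
  have "\<not> (\<exists>r1 \<in> rules_II U M I N J - {r}. rule_implies r1 r)"
    using rule_implies_rule_of_extent_eq[OF X] unfolding r_eq by blast
  then show "r \<in> necessary_rules_II U M I N J"
    using rule_of_extent_in_rules_II[OF X] unfolding necessary_rules_II_def r_eq by blast
qed

theorem theorem4p3:
  fixes U :: "'u set" and M :: "'m set" and I :: "('u \<times> 'm) set"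
    and N :: "'n set" and J :: "('u \<times> 'n) set"
  assumes "formal_decision_context U M I N J"
  shows "necessary_rules_II U M I N J =
    {((\<Union> (S1 U M I N J `` {X}), obox U M I (\<Union> (S1 U M I N J `` {X}))),
      (abox U N J (odia U N J X), odia U N J X)) | X. X \<in> ExtLO U M I}"
  by (simp add: necessary_rules_II_eq_image_rule_of_extent rule_of_extent_def Setcompr_eq_image)

end
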